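(* Let $\mathbb{F}$ be an infinite field. Let $I,J,K,I',J',K'$ be finite sets, $\Phi\subseteq I\times J\times K$, and let $f:I\to I'$, $g:J\to J'$, $h:K\to K'$ be functions. Then $R_s(\Phi)\ge R_s((f\times g\times h)(\Phi))$.
   Context: A tensor over $\mathbb{F}$ is a trilinear form $T=\sum_{i\in I,j\in J,k\in K} t_{i,j,k}x_iy_jz_k$ in formal variables indexed by finite sets $I,J,K$; its support is $\operatorname{supp}(T)=\{(i,j,k): t_{i,j,k}\neq 0\}$. The rank $R(T)$ is the smallest $L$ such that $T$ is a sum of $L$ products $(\sum_i a_ix_i)(\sum_j b_jy_j)(\sum_k c_kz_k)$ of linear forms. For $\Phi\subseteq I\times J\times K$, the support rank is $R_s(\Phi)=\min\{R(T):\operatorname{supp}(T)=\Phi\}$ (over tensors with coefficients in $\mathbb{F}$). *)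

theory Defs
  imports Main
begin

text \<open>A tensor over field 'a with index sets I, J, K is represented by its coefficient
  function t :: 'i => 'j => 'k => 'a; only the values on I x J x K are relevant.\<close>

definition tsupp :: "'i set \<Rightarrow> 'j set \<Rightarrow> 'k set \<Rightarrow> ('i \<Rightarrow> 'j \<Rightarrow> 'k \<Rightarrow> 'a::zero) \<Rightarrow> ('i \<times> 'j \<times> 'k) set" where
  "tsupp I J K t = {(i,j,k). i \<in> I \<and> j \<in> J \<and> k \<in> K \<and> t i j k \<noteq> 0}"

definition rank_le :: "'i set \<Rightarrow> 'j set \<Rightarrow> 'k set \<Rightarrow> ('i \<Rightarrow> 'j \<Rightarrow> 'k \<Rightarrow> 'a::comm_ring_1) \<Rightarrow> nat \<Rightarrow> bool" where
  "rank_le I J K t L = (\<exists>(a :: nat \<Rightarrow> 'i \<Rightarrow> 'a) (b :: nat \<Rightarrow> 'j \<Rightarrow> 'a) (c :: nat \<Rightarrow> 'k \<Rightarrow> 'a).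
      \<forall>i\<in>I. \<forall>j\<in>J. \<forall>k\<in>K. t i j k = (\<Sum>l<L. a l i * b l j * c l k))"

definition tensor_rank :: "'i set \<Rightarrow> 'j set \<Rightarrow> 'k set \<Rightarrow> ('i \<Rightarrow> 'j \<Rightarrow> 'k \<Rightarrow> 'a::comm_ring_1) \<Rightarrow> nat" where
  "tensor_rank I J K t = (LEAST L. rank_le I J K t L)"

definition support_rank :: "'a::field itself \<Rightarrow> 'i set \<Rightarrow> 'j set \<Rightarrow> 'k set \<Rightarrow> ('i \<times> 'j \<times> 'k) set \<Rightarrow> nat" where
  "support_rank _ I J K \<Phi> =
     (LEAST r. \<exists>t :: 'i \<Rightarrow> 'j \<Rightarrow> 'k \<Rightarrow> 'a. tsupp I J K t = \<Phi> \<and> tensor_rank I J K t = r)"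

end

theory Submission
  imports Defs "HOL-Computational_Algebra.Polynomial"
begin

(* Take a tensor t with support \<Phi> and rank R_s(\<Phi>). Rescaling it to u_i v_j w_k t_ijk and
  summing over the fibres of f \<times> g \<times> h acts by linear maps on the three factors, so it does
  not increase the rank, and the support of the result lies in the image of \<Phi>. Equality needs
  weights that avoid cancellation in every fibre: with u_i = x^\<alpha>(i), v_j = x^\<beta>(j),
  w_k = x^\<gamma>(k) for exponents making \<alpha>(i) + \<beta>(j) + \<gamma>(k) injective, each fibre sum is a
  polynomial in x whose coefficients are entries of t, and over an infinite field there is an x
  that is a root of none of these finitely many nonzero polynomials. *)

lemma two_digit_eq_iff:
  fixes a b a' b' M :: nat
  assumes "a < M" "a' < M"
  shows "a + M * b = a' + M * b' \<longleftrightarrow> a = a' \<and> b = b'"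
proof
  assume eq: "a + M * b = a' + M * b'"
  then have "a = a'"
    using assms by (metis mod_mult_self2 mod_less)
  with eq assms show "a = a' \<and> b = b'" by simp
qed simp

lemma exists_inj_on_additive_code:
  assumes "finite I" "finite J" "finite K"
  shows "\<exists>(\<alpha> :: 'i \<Rightarrow> nat) (\<beta> :: 'j \<Rightarrow> nat) (\<gamma> :: 'k \<Rightarrow> nat).
           inj_on (\<lambda>(i, j, k). \<alpha> i + \<beta> j + \<gamma> k) (I \<times> J \<times> K)"
proof -
  obtain n where n: "bij_betw n I {0..<card I}" using ex_bij_betw_finite_nat[OF assms(1)] by blast
  obtain m where m: "bij_betw m J {0..<card J}" using ex_bij_betw_finite_nat[OF assms(2)] by blast
  obtain p where p: "bij_betw p K {0..<card K}" using ex_bij_betw_finite_nat[OF assms(3)] by blast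
  define M where "M = card I + card J + 1"
  have "n i < M" if "i \<in> I" for i
    using bij_betwE[OF n] that by (auto simp: M_def)
  moreover have "m j < M" if "j \<in> J" for j
    using bij_betwE[OF m] that by (auto simp: M_def)
  ultimately have "inj_on (\<lambda>(i, j, k). n i + M * (m j + M * p k)) (I \<times> J \<times> K)"
    using bij_betw_imp_inj_on[OF n] bij_betw_imp_inj_on[OF m] bij_betw_imp_inj_on[OF p]
    by (auto simp: inj_on_def two_digit_eq_iff)
  then have "inj_on (\<lambda>(i, j, k). n i + M * m j + M * M * p k) (I \<times> J \<times> K)"
    by (simp add: algebra_simps)
  then show ?thesis
    by (intro exI[of _ n] exI[of _ "\<lambda>j. M * m j"] exI[of _ "\<lambda>k. M * M * p k"])
qed

lemma coeff_sum_monom_inj_on: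
  assumes "finite S" "inj_on e S" "s \<in> S"
  shows "coeff (\<Sum>r\<in>S. monom (c r) (e r)) (e s) = c s"
proof -
  have "coeff (\<Sum>r\<in>S. monom (c r) (e r)) (e s) = (\<Sum>r\<in>S. if r = s then c r else 0)"
    unfolding coeff_sum coeff_monom using assms(2,3) by (intro sum.cong) (auto dest: inj_onD)
  also have "\<dots> = c s"
    using assms(1,3) by simp
  finally show ?thesis .
qed

lemma exists_common_non_root:
  assumes "infinite (UNIV :: 'a::idom set)" "finite Ps"
  shows "\<exists>x :: 'a. \<forall>p\<in>Ps. p \<noteq> 0 \<longrightarrow> poly p x \<noteq> 0"
proof -
  have "finite (\<Union>p\<in>Ps - {0}. {x. poly p x = 0})"
    using assms(2) by (auto intro: poly_roots_finite)
  then show ?thesis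
    using ex_new_if_finite[OF assms(1)] by blast
qed

lemma sum_product3:
  fixes X :: "'i \<Rightarrow> 'a::comm_semiring_1"
  shows "sum X A * sum Y B * sum Z C = (\<Sum>i\<in>A. \<Sum>j\<in>B. \<Sum>k\<in>C. X i * Y j * Z k)"
proof -
  have "sum X A * sum Y B * sum Z C = (\<Sum>i\<in>A. \<Sum>j\<in>B. X i * Y j) * sum Z C"
    by (simp only: sum_product)
  also have "\<dots> = (\<Sum>i\<in>A. \<Sum>j\<in>B. X i * Y j * sum Z C)"
    by (simp only: sum_distrib_right)
  also have "\<dots> = (\<Sum>i\<in>A. \<Sum>j\<in>B. \<Sum>k\<in>C. X i * Y j * Z k)"
    by (simp only: sum_distrib_left)
  finally show ?thesis .
qed

definition tensor_rescale ::
    "('i \<Rightarrow> 'a) \<Rightarrow> ('j \<Rightarrow> 'a) \<Rightarrow> ('k \<Rightarrow> 'a) \<Rightarrow> ('i \<Rightarrow> 'j \<Rightarrow> 'k \<Rightarrow> 'a::comm_semiring_1)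
     \<Rightarrow> 'i \<Rightarrow> 'j \<Rightarrow> 'k \<Rightarrow> 'a" where
  "tensor_rescale u v w t i j k = u i * v j * w k * t i j k"

definition tensor_pushforward ::
    "('i \<Rightarrow> 'i2) \<Rightarrow> ('j \<Rightarrow> 'j2) \<Rightarrow> ('k \<Rightarrow> 'k2) \<Rightarrow> 'i set \<Rightarrow> 'j set \<Rightarrow> 'k set
     \<Rightarrow> ('i \<Rightarrow> 'j \<Rightarrow> 'k \<Rightarrow> 'a::comm_monoid_add) \<Rightarrow> 'i2 \<Rightarrow> 'j2 \<Rightarrow> 'k2 \<Rightarrow> 'a" where
  "tensor_pushforward f g h I J K t i' j' k' =
     (\<Sum>i\<in>{i\<in>I. f i = i'}. \<Sum>j\<in>{j\<in>J. g j = j'}. \<Sum>k\<in>{k\<in>K. h k = k'}. t i j k)"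

lemma ex_rank_le:
  fixes t :: "'i \<Rightarrow> 'j \<Rightarrow> 'k \<Rightarrow> 'a::comm_ring_1"
  assumes "finite I" "finite J" "finite K"
  shows "\<exists>L. rank_le I J K t L"
proof -
  define S where "S = I \<times> J \<times> K"
  have "finite S" using assms by (simp add: S_def)
  then obtain e where e: "bij_betw e {..<card S} S"
    using ex_bij_betw_nat_finite lessThan_atLeast0 by metis
  define a where "a l i = (if i = fst (e l) then t i (fst (snd (e l))) (snd (snd (e l))) else 0)"
    for l i
  define b :: "nat \<Rightarrow> 'j \<Rightarrow> 'a" where "b l j = (if j = fst (snd (e l)) then 1 else 0)" for l j
  define c :: "nat \<Rightarrow> 'k \<Rightarrow> 'a" where "c l k = (if k = snd (snd (e l)) then 1 else 0)" for l k
  have "t i j k = (\<Sum>l<card S. a l i * b l j * c l k)" if "i \<in> I" "j \<in> J" "k \<in> K" for i j k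
  proof -
    define \<delta> where "\<delta> s = (if s = (i, j, k) then t i j k else 0)" for s
    have "(\<Sum>l<card S. a l i * b l j * c l k) = (\<Sum>l<card S. \<delta> (e l))"
      by (rule sum.cong) (auto simp: a_def b_def c_def \<delta>_def prod_eq_iff)
    also have "\<dots> = sum \<delta> S"
      using sum.reindex_bij_betw[OF e] .
    also have "\<dots> = t i j k"
      using \<open>finite S\<close> that by (simp add: \<delta>_def S_def)
    finally show ?thesis ..
  qed
  then show ?thesis unfolding rank_le_def by blast
qed

lemma rank_le_tensor_rank:
  fixes t :: "'i \<Rightarrow> 'j \<Rightarrow> 'k \<Rightarrow> 'a::comm_ring_1"
  assumes "finite I" "finite J" "finite K"
  shows "rank_le I J K t (tensor_rank I J K t)"
  unfolding tensor_rank_def using ex_rank_le[OF assms] by (rule LeastI_ex)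

lemma support_rank_attained:
  assumes "\<Phi> \<subseteq> I \<times> J \<times> K"
  obtains t :: "'i \<Rightarrow> 'j \<Rightarrow> 'k \<Rightarrow> 'a::field"
  where "tsupp I J K t = \<Phi>" "tensor_rank I J K t = support_rank TYPE('a) I J K \<Phi>"
proof -
  define t :: "'i \<Rightarrow> 'j \<Rightarrow> 'k \<Rightarrow> 'a" where "t i j k = (if (i, j, k) \<in> \<Phi> then 1 else 0)" for i j k
  have "tsupp I J K t = \<Phi>" using assms unfolding tsupp_def t_def by auto
  then have "\<exists>r. \<exists>t :: 'i \<Rightarrow> 'j \<Rightarrow> 'k \<Rightarrow> 'a. tsupp I J K t = \<Phi> \<and> tensor_rank I J K t = r"
    by blast
  from LeastI_ex[OF this] show ?thesis
    using that unfolding support_rank_def by blast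
qed

lemma support_rank_le:
  fixes t :: "'i \<Rightarrow> 'j \<Rightarrow> 'k \<Rightarrow> 'a::field"
  assumes "tsupp I J K t = \<Phi>" "rank_le I J K t L"
  shows "support_rank TYPE('a) I J K \<Phi> \<le> L"
proof -
  have "support_rank TYPE('a) I J K \<Phi> \<le> tensor_rank I J K t"
    unfolding support_rank_def by (rule Least_le) (use assms(1) in blast)
  also have "\<dots> \<le> L"
    unfolding tensor_rank_def by (rule Least_le) (rule assms(2))
  finally show ?thesis .
qed

lemma rank_le_tensor_rescale:
  assumes "rank_le I J K t L"
  shows "rank_le I J K (tensor_rescale u v w t) L"
proof -
  obtain a b c where abc: "\<forall>i\<in>I. \<forall>j\<in>J. \<forall>k\<in>K. t i j k = (\<Sum>l<L. a l i * b l j * c l k)"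
    using assms unfolding rank_le_def by blast
  have "tensor_rescale u v w t i j k
          = (\<Sum>l<L. (u i * a l i) * (v j * b l j) * (w k * c l k))"
    if "i \<in> I" "j \<in> J" "k \<in> K" for i j k
    using abc that by (simp add: tensor_rescale_def sum_distrib_left mult_ac)
  then show ?thesis
    unfolding rank_le_def by (intro exI[of _ "\<lambda>l i. u i * a l i"] exI[of _ "\<lambda>l j. v j * b l j"]
      exI[of _ "\<lambda>l k. w k * c l k"]) blast
qed

lemma rank_le_tensor_pushforward:
  assumes "rank_le I J K t L"
  shows "rank_le I' J' K' (tensor_pushforward f g h I J K t) L"
proof -
  obtain a b c where abc: "\<forall>i\<in>I. \<forall>j\<in>J. \<forall>k\<in>K. t i j k = (\<Sum>l<L. a l i * b l j * c l k)"
    using assms unfolding rank_le_def by blast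
  define A where "A i' = {i\<in>I. f i = i'}" for i'
  define B where "B j' = {j\<in>J. g j = j'}" for j'
  define C where "C k' = {k\<in>K. h k = k'}" for k'
  have "tensor_pushforward f g h I J K t i' j' k'
          = (\<Sum>l<L. (\<Sum>i\<in>A i'. a l i) * (\<Sum>j\<in>B j'. b l j) * (\<Sum>k\<in>C k'. c l k))" for i' j' k'
  proof -
    have "tensor_pushforward f g h I J K t i' j' k'
            = (\<Sum>i\<in>A i'. \<Sum>j\<in>B j'. \<Sum>k\<in>C k'. \<Sum>l<L. a l i * b l j * c l k)"
      unfolding tensor_pushforward_def A_def B_def C_def using abc by (intro sum.cong) auto
    also have "\<dots> = (\<Sum>l<L. \<Sum>i\<in>A i'. \<Sum>j\<in>B j'. \<Sum>k\<in>C k'. a l i * b l j * c l k)"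
      by (simp add: sum.swap[of _ _ "{..<L}"])
    also have "\<dots> = (\<Sum>l<L. (\<Sum>i\<in>A i'. a l i) * (\<Sum>j\<in>B j'. b l j) * (\<Sum>k\<in>C k'. c l k))"
      by (simp only: sum_product3)
    finally show ?thesis .
  qed
  then show ?thesis
    unfolding rank_le_def by (intro exI[of _ "\<lambda>l i'. \<Sum>i\<in>A i'. a l i"]
      exI[of _ "\<lambda>l j'. \<Sum>j\<in>B j'. b l j"] exI[of _ "\<lambda>l k'. \<Sum>k\<in>C k'. c l k"]) blast
qed

lemma tsupp_tensor_rescale_subset: "tsupp I J K (tensor_rescale u v w t) \<subseteq> tsupp I J K t"
  unfolding tsupp_def tensor_rescale_def by auto

lemma tensor_pushforward_eq_sum_fibre:
  "tensor_pushforward f g h I J K t i' j' k' =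
     (\<Sum>(i, j, k) \<in> {i\<in>I. f i = i'} \<times> {j\<in>J. g j = j'} \<times> {k\<in>K. h k = k'}. t i j k)"
  by (simp add: tensor_pushforward_def sum.cartesian_product)

lemma tsupp_tensor_pushforward_subset:
  "tsupp I' J' K' (tensor_pushforward f g h I J K t)
     \<subseteq> (\<lambda>(i, j, k). (f i, g j, h k)) ` tsupp I J K t"
proof
  fix s assume "s \<in> tsupp I' J' K' (tensor_pushforward f g h I J K t)"
  then obtain i' j' k' where s: "s = (i', j', k')"
    and "tensor_pushforward f g h I J K t i' j' k' \<noteq> 0"
    unfolding tsupp_def by auto
  then obtain i j k where "i \<in> I" "j \<in> J" "k \<in> K" "f i = i'" "g j = j'" "h k = k'" "t i j k \<noteq> 0"
    unfolding tensor_pushforward_eq_sum_fibre by (auto elim: sum.not_neutral_contains_not_neutral)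
  then show "s \<in> (\<lambda>(i, j, k). (f i, g j, h k)) ` tsupp I J K t"
    unfolding s tsupp_def by (auto intro!: image_eqI[where x = "(i, j, k)"])
qed

lemma exists_rescale_tensor_pushforward_nonzero:
  fixes t :: "'i \<Rightarrow> 'j \<Rightarrow> 'k \<Rightarrow> 'a::idom"
  assumes "infinite (UNIV :: 'a set)" "finite I" "finite J" "finite K"
  shows "\<exists>u v w. \<forall>(i, j, k) \<in> tsupp I J K t.
           tensor_pushforward f g h I J K (tensor_rescale u v w t) (f i) (g j) (h k) \<noteq> 0"
proof -
  obtain \<alpha> \<beta> \<gamma> :: "_ \<Rightarrow> nat"
    where code: "inj_on (\<lambda>(i, j, k). \<alpha> i + \<beta> j + \<gamma> k) (I \<times> J \<times> K)"
    using exists_inj_on_additive_code[OF assms(2-4)] by blast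
  define fibre where
    "fibre i' j' k' = {i\<in>I. f i = i'} \<times> {j\<in>J. g j = j'} \<times> {k\<in>K. h k = k'}" for i' j' k'
  define P where
    "P i' j' k' = (\<Sum>s\<in>fibre i' j' k'.
       monom ((\<lambda>(i, j, k). t i j k) s) ((\<lambda>(i, j, k). \<alpha> i + \<beta> j + \<gamma> k) s))" for i' j' k'
  define t' where "t' x = tensor_pushforward f g h I J K
    (tensor_rescale (\<lambda>i. x ^ \<alpha> i) (\<lambda>j. x ^ \<beta> j) (\<lambda>k. x ^ \<gamma> k) t)" for x
  have poly_P: "poly (P i' j' k') x = t' x i' j' k'" for x i' j' k'
    unfolding P_def t'_def fibre_def tensor_pushforward_eq_sum_fibre poly_sum poly_monom
    by (intro sum.cong) (auto simp: tensor_rescale_def power_add mult_ac)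
  have P_nonzero: "P (f i) (g j) (h k) \<noteq> 0" if "(i, j, k) \<in> tsupp I J K t" for i j k
  proof -
    have "(i, j, k) \<in> fibre (f i) (g j) (h k)" "finite (fibre (f i) (g j) (h k))"
      "fibre (f i) (g j) (h k) \<subseteq> I \<times> J \<times> K"
      using that assms(2-4) unfolding tsupp_def fibre_def by auto
    from coeff_sum_monom_inj_on[where c = "\<lambda>(i, j, k). t i j k",
        OF this(2) inj_on_subset[OF code this(3)] this(1)]
    have "coeff (P (f i) (g j) (h k)) (\<alpha> i + \<beta> j + \<gamma> k) = t i j k"
      unfolding P_def by simp
    then show ?thesis
      using that unfolding tsupp_def by auto
  qed
  define Ps where "Ps = (\<lambda>(i, j, k). P (f i) (g j) (h k)) ` (I \<times> J \<times> K)"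
  have "finite Ps"
    using assms(2-4) by (simp add: Ps_def)
  then obtain x where x: "\<forall>p\<in>Ps. p \<noteq> 0 \<longrightarrow> poly p x \<noteq> 0"
    using exists_common_non_root[OF assms(1)] by blast
  have "poly (P (f i) (g j) (h k)) x \<noteq> 0" if "(i, j, k) \<in> tsupp I J K t" for i j k
    using x P_nonzero[OF that] that unfolding Ps_def tsupp_def by force
  then show ?thesis
    unfolding poly_P t'_def by blast
qed

lemma exists_rescale_tsupp_tensor_pushforward:
  fixes t :: "'i \<Rightarrow> 'j \<Rightarrow> 'k \<Rightarrow> 'a::idom"
  assumes "infinite (UNIV :: 'a set)" "finite I" "finite J" "finite K"
    and "f ` I \<subseteq> I'" "g ` J \<subseteq> J'" "h ` K \<subseteq> K'"
  shows "\<exists>u v w. tsupp I' J' K' (tensor_pushforward f g h I J K (tensor_rescale u v w t))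
                   = (\<lambda>(i, j, k). (f i, g j, h k)) ` tsupp I J K t"
proof -
  obtain u v w where nonzero: "\<forall>(i, j, k) \<in> tsupp I J K t.
      tensor_pushforward f g h I J K (tensor_rescale u v w t) (f i) (g j) (h k) \<noteq> 0"
    using exists_rescale_tensor_pushforward_nonzero[OF assms(1-4)] by blast
  have "tsupp I' J' K' (tensor_pushforward f g h I J K (tensor_rescale u v w t))
          \<subseteq> (\<lambda>(i, j, k). (f i, g j, h k)) ` tsupp I J K (tensor_rescale u v w t)"
    by (rule tsupp_tensor_pushforward_subset)
  also have "\<dots> \<subseteq> (\<lambda>(i, j, k). (f i, g j, h k)) ` tsupp I J K t"
    by (intro image_mono tsupp_tensor_rescale_subset)
  finally have "tsupp I' J' K' (tensor_pushforward f g h I J K (tensor_rescale u v w t))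
          \<subseteq> (\<lambda>(i, j, k). (f i, g j, h k)) ` tsupp I J K t" .
  moreover have "(\<lambda>(i, j, k). (f i, g j, h k)) ` tsupp I J K t
          \<subseteq> tsupp I' J' K' (tensor_pushforward f g h I J K (tensor_rescale u v w t))"
    using nonzero assms(5-7) unfolding tsupp_def by fastforce
  ultimately show ?thesis by blast
qed

theorem proposition3p2:
  fixes I :: "'i set" and J :: "'j set" and K :: "'k set"
    and I' :: "'i2 set" and J' :: "'j2 set" and K' :: "'k2 set"
    and f :: "'i \<Rightarrow> 'i2" and g :: "'j \<Rightarrow> 'j2" and h :: "'k \<Rightarrow> 'k2"
    and \<Phi> :: "('i \<times> 'j \<times> 'k) set"
  assumes "infinite (UNIV :: 'a::field set)"
    and "finite I" "finite J" "finite K" "finite I'" "finite J'" "finite K'"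
    and "\<Phi> \<subseteq> I \<times> J \<times> K"
    and "f ` I \<subseteq> I'" "g ` J \<subseteq> J'" "h ` K \<subseteq> K'"
  shows "support_rank TYPE('a) I J K \<Phi> \<ge>
         support_rank TYPE('a) I' J' K' ((\<lambda>(i,j,k). (f i, g j, h k)) ` \<Phi>)"
proof -
  obtain t :: "'i \<Rightarrow> 'j \<Rightarrow> 'k \<Rightarrow> 'a" where t: "tsupp I J K t = \<Phi>"
    and rank: "tensor_rank I J K t = support_rank TYPE('a) I J K \<Phi>"
    using support_rank_attained[OF assms(8)] by blast
  obtain u v w where supp: "tsupp I' J' K' (tensor_pushforward f g h I J K (tensor_rescale u v w t))
                             = (\<lambda>(i, j, k). (f i, g j, h k)) ` \<Phi>"
    using exists_rescale_tsupp_tensor_pushforward[OF assms(1-4) assms(9-11)] t by blast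
  have "rank_le I' J' K' (tensor_pushforward f g h I J K (tensor_rescale u v w t))
          (support_rank TYPE('a) I J K \<Phi>)"
    using rank_le_tensor_rank[OF assms(2-4), of t]
    unfolding rank by (intro rank_le_tensor_pushforward rank_le_tensor_rescale)
  with supp show ?thesis
    by (rule support_rank_le)
qed

end
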